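(* Let $|\psi\rangle,|\phi\rangle,|e\rangle,|f\rangle$ be unit vectors in $\mathbb{C}^2$ and let $\mathcal{GE}$ be the set of entanglement breaking channels on $\mathcal{L}(\mathbb{C}^2)$. Then $$\max_{\Psi\in\mathcal{GE}}\left\{\frac12\langle e|\Psi(|\psi\rangle\langle\psi|)|e\rangle+\frac12\langle f|\Psi(|\phi\rangle\langle\phi|)|f\rangle\right\}\le\frac12\left(1+\sqrt{|\langle e|f\rangle|^2+\max\left\{|\langle\psi|\phi\rangle||\langle e|f\rangle|,\sqrt{(1-|\langle\psi|\phi\rangle|^2)(1-|\langle e|f\rangle|^2)}\right\}^2}\right).$$
   Context: A quantum channel (linear, completely positive, trace preserving map on $\mathcal{L}(\mathbb{C}^2)$) $\Psi$ is entanglement breaking if $(\mathrm{id}\otimes\Psi)(\rho)$ is separable for every density operator $\rho$ on $\mathbb{C}^2\otimes\mathbb{C}^2$. *)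

theory Defs
  imports "HOL-Analysis.Analysis" "HOL-Library.Numeral_Type"
begin

text \<open>Operators on C^2 are matrices complex^2^2; operators on C^2 (x) C^2 are
  matrices indexed by the product type 2 \<times> 2 (first component = first factor).\<close>

type_synonym qmat = "complex^2^2"

definition cinner :: "complex^'n::finite \<Rightarrow> complex^'n \<Rightarrow> complex" where
  "cinner u v = (\<Sum>i\<in>UNIV. cnj (u$i) * v$i)"

definition ctrace :: "complex^'n::finite^'n \<Rightarrow> complex" where
  "ctrace A = (\<Sum>i\<in>UNIV. A$i$i)"

definition cscale :: "complex \<Rightarrow> complex^'n::finite^'m::finite \<Rightarrow> complex^'n^'m" where
  "cscale c A = (\<chi> i j. c * A$i$j)"

definition psd :: "complex^'n::finite^'n \<Rightarrow> bool" where
  "psd A \<longleftrightarrow> (\<forall>v. cinner v (A *v v) \<in> \<real> \<and> 0 \<le> Re (cinner v (A *v v)))"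

definition density :: "complex^'n::finite^'n \<Rightarrow> bool" where
  "density A \<longleftrightarrow> psd A \<and> ctrace A = 1"

definition proj :: "complex^'n::finite \<Rightarrow> complex^'n^'n" where
  "proj v = (\<chi> i j. v$i * cnj (v$j))"

definition kron :: "complex^'a::finite^'a \<Rightarrow> complex^'b::finite^'b \<Rightarrow> complex^('a\<times>'b)^('a\<times>'b)" where
  "kron A B = (\<chi> r c. A$(fst r)$(fst c) * B$(snd r)$(snd c))"

text \<open>Positivity of an element of M_n(L(C^2)) = L(C^n (x) C^2), given as an n\<times>n block
  matrix with 2\<times>2 blocks M i j (i, j < n).\<close>
definition psd_block :: "nat \<Rightarrow> (nat \<Rightarrow> nat \<Rightarrow> qmat) \<Rightarrow> bool" where
  "psd_block n M \<longleftrightarrow> (\<forall>v :: nat \<Rightarrow> complex^2.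
      (\<Sum>i<n. \<Sum>j<n. cinner (v i) (M i j *v v j)) \<in> \<real> \<and>
      0 \<le> Re (\<Sum>i<n. \<Sum>j<n. cinner (v i) (M i j *v v j)))"

definition complex_linear :: "(qmat \<Rightarrow> qmat) \<Rightarrow> bool" where
  "complex_linear \<Psi> \<longleftrightarrow> (\<forall>A B. \<Psi> (A + B) = \<Psi> A + \<Psi> B) \<and> (\<forall>c A. \<Psi> (cscale c A) = cscale c (\<Psi> A))"

definition completely_positive :: "(qmat \<Rightarrow> qmat) \<Rightarrow> bool" where
  "completely_positive \<Psi> \<longleftrightarrow> (\<forall>n M. psd_block n M \<longrightarrow> psd_block n (\<lambda>i j. \<Psi> (M i j)))"

definition trace_preserving :: "(qmat \<Rightarrow> qmat) \<Rightarrow> bool" where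
  "trace_preserving \<Psi> \<longleftrightarrow> (\<forall>A. ctrace (\<Psi> A) = ctrace A)"

definition quantum_channel :: "(qmat \<Rightarrow> qmat) \<Rightarrow> bool" where
  "quantum_channel \<Psi> \<longleftrightarrow> complex_linear \<Psi> \<and> completely_positive \<Psi> \<and> trace_preserving \<Psi>"

text \<open>(id (x) \<Psi>) on L(C^2 (x) C^2): apply \<Psi> to each 2\<times>2 block.\<close>
definition id_tensor :: "(qmat \<Rightarrow> qmat) \<Rightarrow> complex^(2\<times>2)^(2\<times>2) \<Rightarrow> complex^(2\<times>2)^(2\<times>2)" where
  "id_tensor \<Psi> \<rho> = (\<chi> r c. \<Psi> (\<chi> j l. \<rho>$(fst r, j)$(fst c, l)) $ (snd r) $ (snd c))"

definition separable :: "complex^(2\<times>2)^(2\<times>2) \<Rightarrow> bool" where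
  "separable \<rho> \<longleftrightarrow> (\<exists>(K::nat) (p::nat \<Rightarrow> real) (a::nat \<Rightarrow> qmat) (b::nat \<Rightarrow> qmat).
      (\<forall>k<K. 0 \<le> p k \<and> density (a k) \<and> density (b k)) \<and> (\<Sum>k<K. p k) = 1 \<and>
      \<rho> = (\<Sum>k<K. cscale (complex_of_real (p k)) (kron (a k) (b k))))"

definition entanglement_breaking :: "(qmat \<Rightarrow> qmat) \<Rightarrow> bool" where
  "entanglement_breaking \<Psi> \<longleftrightarrow> quantum_channel \<Psi> \<and>
     (\<forall>\<rho> :: complex^(2\<times>2)^(2\<times>2). density \<rho> \<longrightarrow> separable (id_tensor \<Psi> \<rho>))"

end

theory Submission
  imports Defs
begin

(* The Choi state of an entanglement breaking channel is separable, sum_k p_k a_k (x) b_k, so the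
   channel has measure-and-prepare form Psi X = 2 sum_k p_k tr (X^T a_k) b_k, and trace preservation
   forces sum_k p_k a_k = I/2.  In Bloch coordinates the objective becomes the p-average of
   (1/2 + x_k.u)(1/2 + y_k.E) + (1/2 + x_k.v)(1/2 + y_k.F) with |x_k|, |y_k| <= 1/2 and
   sum_k p_k x_k = 0, where u, v, E, F are unit vectors with u.v = 2|<psi|phi>|^2 - 1 and
   E.F = 2|<e|f>|^2 - 1.  Bounding |h + z| for h = (E + F)/2 by the tangent line of the square root
   makes each term at most a constant plus a linear function of x_k, and the linear parts average
   out; the constant comes from the norm of x |-> (x.u) E + (x.v) F, computed with Bessel's
   inequality for the orthogonal pair u + v, u - v. *)

(* p = 0 or q = 0 is allowed: the corresponding quotient is then 0 / 0 = 0. *)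
lemma bessel_inequality_orthogonal_pair:
  fixes x p q :: "'a::real_inner"
  assumes "inner p q = 0"
  shows "(inner x p)\<^sup>2 / inner p p + (inner x q)\<^sup>2 / inner q q \<le> inner x x"
proof -
  define r where "r = x - (inner x p / inner p p) *\<^sub>R p - (inner x q / inner q q) *\<^sub>R q"
  have "inner r r = inner x x - ((inner x p)\<^sup>2 / inner p p + (inner x q)\<^sup>2 / inner q q)"
    unfolding r_def using assms
    by (cases "p = 0"; cases "q = 0")
       (auto simp: inner_diff_left inner_diff_right inner_add_left inner_add_right inner_commute
          power2_eq_square field_simps)
  then show ?thesis
    by (metis diff_ge_0_iff_ge inner_ge_zero)
qed

lemma norm_inner_combination_sq_le:
  fixes u v E F x :: "'a::real_inner"
  assumes "norm u = 1" "norm v = 1" "norm E = 1" "norm F = 1"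
  shows "(norm (inner x u *\<^sub>R E + inner x v *\<^sub>R F))\<^sup>2
     \<le> max ((1 + inner E F) * (1 + inner u v)) ((1 - inner E F) * (1 - inner u v)) * (norm x)\<^sup>2"
proof -
  define c d where "c = inner E F" and "d = inner u v"
  define K where "K = max ((1 + c) * (1 + d)) ((1 - c) * (1 - d))"
  define s t where "s = inner x (u + v)" and "t = inner x (u - v)"
  have unit: "inner u u = 1" "inner v v = 1" "inner E E = 1" "inner F F = 1"
    using assms by (simp_all add: dot_square_norm)
  have bounds: "\<bar>c\<bar> \<le> 1" "\<bar>d\<bar> \<le> 1"
    unfolding c_def d_def using assms Cauchy_Schwarz_ineq2[of E F] Cauchy_Schwarz_ineq2[of u v]
    by simp_all
  have split: "2 * (norm (inner x u *\<^sub>R E + inner x v *\<^sub>R F))\<^sup>2 = (1 + c) * s\<^sup>2 + (1 - c) * t\<^sup>2"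
    unfolding power2_norm_eq_inner s_def t_def c_def
    by (simp add: inner_add_left inner_add_right inner_diff_right unit inner_commute[of F E])
       (simp add: algebra_simps power2_eq_square)
  have weight: "\<alpha> * (inner x w)\<^sup>2 \<le> \<beta> * ((inner x w)\<^sup>2 / inner w w)"
    if "\<alpha> * inner w w \<le> \<beta>" for \<alpha> \<beta> w
  proof (cases "w = 0")
    case False
    then have "\<alpha> * (inner x w)\<^sup>2 = (\<alpha> * inner w w) * ((inner x w)\<^sup>2 / inner w w)"
      by simp
    also have "\<dots> \<le> \<beta> * ((inner x w)\<^sup>2 / inner w w)"
      using that by (intro mult_right_mono) auto
    finally show ?thesis .
  qed simp
  have pp: "inner (u + v) (u + v) = 2 * (1 + d)" and qq: "inner (u - v) (u - v) = 2 * (1 - d)"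
    by (simp_all add: d_def inner_add_left inner_add_right inner_diff_left inner_diff_right unit
        inner_commute[of v u])
  have "(1 + c) * (1 + d) \<le> K" "(1 - c) * (1 - d) \<le> K"
    by (simp_all add: K_def)
  then have "(1 + c) * s\<^sup>2 + (1 - c) * t\<^sup>2
      \<le> 2 * K * (s\<^sup>2 / inner (u + v) (u + v) + t\<^sup>2 / inner (u - v) (u - v))"
    unfolding s_def t_def distrib_left
    by (intro add_mono weight; unfold pp qq; simp add: algebra_simps)+
  also have "\<dots> \<le> 2 * K * inner x x"
    using bounds unfolding s_def t_def
    by (intro mult_left_mono bessel_inequality_orthogonal_pair)
       (auto simp: K_def le_max_iff_disj abs_le_iff inner_add_left inner_diff_right unit
          inner_commute[of u v])
  finally have "(1 + c) * s\<^sup>2 + (1 - c) * t\<^sup>2 \<le> 2 * K * inner x x" .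
  then show ?thesis
    using split by (simp add: K_def c_def d_def dot_square_norm)
qed

lemma norm_add_le_tangent:
  fixes h z :: "'a::real_inner"
  assumes "norm z \<le> m"
  defines "l \<equiv> sqrt ((norm h)\<^sup>2 + m\<^sup>2)"
  shows "norm (h + z) \<le> l + inner h z / l"
proof (cases "l = 0")
  case True
  then have "h = 0" "m = 0"
    unfolding l_def by (simp_all add: add_nonneg_eq_0_iff)
  then show ?thesis
    using assms by simp
next
  case False
  then have l_pos: "0 < l" and l_sq: "l\<^sup>2 = (norm h)\<^sup>2 + m\<^sup>2"
    unfolding l_def by (simp_all add: order_le_neq_trans)
  have "\<bar>inner h z\<bar> \<le> norm h * m"
    using Cauchy_Schwarz_ineq2[of h z] assms by (meson mult_left_mono norm_ge_zero order_trans)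
  moreover have "2 * (norm h * m) \<le> l\<^sup>2"
    using sum_squares_bound[of "norm h" m] l_sq by (simp add: mult.assoc)
  moreover have "0 \<le> norm h * m"
    using assms norm_ge_zero order_trans by (metis zero_le_mult_iff)
  ultimately have "0 \<le> l\<^sup>2 + inner h z"
    by (simp add: abs_le_iff)
  then have tangent_nonneg: "0 \<le> l + inner h z / l"
    using l_pos by (simp add: field_simps power2_eq_square)
  have "(norm (h + z))\<^sup>2 = (norm h)\<^sup>2 + 2 * inner h z + (norm z)\<^sup>2"
    by (simp add: power2_norm_eq_inner inner_add_left inner_add_right inner_commute[of z h])
  also have "\<dots> \<le> l\<^sup>2 + 2 * inner h z"
    using assms l_sq by (simp add: power_mono)
  also have "\<dots> \<le> (l + inner h z / l)\<^sup>2"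
    using l_pos by (simp add: power2_sum power_divide)
  finally show ?thesis
    using tangent_nonneg by (rule power2_le_imp_le)
qed

(* Written as 1/2 + x.(u + v)/2 + y.(h + z) with z = (x.u) E + (x.v) F, the term is controlled by
   the tangent bound for |h + z|, which is linear in x. *)
lemma bloch_term_le:
  fixes u v E F x y :: "'a::real_inner"
  assumes units: "norm u = 1" "norm v = 1" "norm E = 1" "norm F = 1"
    and x: "norm x \<le> 1/2" and y: "norm y \<le> 1/2"
    and m: "0 \<le> m"
      "max ((1 + inner E F) * (1 + inner u v)) ((1 - inner E F) * (1 - inner u v)) \<le> (2 * m)\<^sup>2"
  defines "h \<equiv> (1/2) *\<^sub>R (E + F)"
  defines "l \<equiv> sqrt ((norm h)\<^sup>2 + m\<^sup>2)"
  shows "(1/2 + inner x u) * (1/2 + inner y E) + (1/2 + inner x v) * (1/2 + inner y F)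
    \<le> 1/2 + l/2
       + inner x ((1/2) *\<^sub>R (u + v) + (1 / (2 * l)) *\<^sub>R (inner h E *\<^sub>R u + inner h F *\<^sub>R v))"
proof -
  define z where "z = inner x u *\<^sub>R E + inner x v *\<^sub>R F"
  have "(norm z)\<^sup>2 \<le> (2 * m)\<^sup>2 * (norm x)\<^sup>2"
    unfolding z_def using m(2)
    by (intro order_trans[OF norm_inner_combination_sq_le[OF units]] mult_right_mono) simp_all
  also have "\<dots> \<le> (2 * m)\<^sup>2 * (1/2)\<^sup>2"
    using x by (intro mult_left_mono power_mono) auto
  also have "\<dots> = m\<^sup>2"
    by (simp add: power2_eq_square)
  finally have "norm z \<le> m"
    using m(1) by (rule power2_le_imp_le)
  then have "norm (h + z) \<le> l + inner h z / l"
    unfolding l_def by (rule norm_add_le_tangent)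
  then have hz: "inner y (h + z) \<le> 1/2 * (l + inner h z / l)"
    using y norm_cauchy_schwarz[of y "h + z"] by (meson mult_mono norm_ge_zero order_trans)
  have "(1/2 + inner x u) * (1/2 + inner y E) + (1/2 + inner x v) * (1/2 + inner y F)
      = 1/2 + inner x ((1/2) *\<^sub>R (u + v)) + inner y (h + z)"
    unfolding h_def z_def by (simp add: inner_add_right algebra_simps)
  also have "\<dots> \<le> 1/2 + inner x ((1/2) *\<^sub>R (u + v)) + 1/2 * (l + inner h z / l)"
    using hz by simp
  also have "inner h z = inner x (inner h E *\<^sub>R u + inner h F *\<^sub>R v)"
    unfolding z_def by (simp add: inner_add_right inner_add_left inner_commute)
  finally show ?thesis
    by (simp add: inner_add_right add_divide_distrib)
qed

lemma bloch_average_le: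
  fixes u v E F :: "'a::real_inner" and x y :: "nat \<Rightarrow> 'a" and p :: "nat \<Rightarrow> real"
    and a b :: real
  assumes units: "norm u = 1" "norm v = 1" "norm E = 1" "norm F = 1"
    and terms: "\<forall>k<K. 0 \<le> p k \<and> norm (x k) \<le> 1/2 \<and> norm (y k) \<le> 1/2"
    and p_sum: "(\<Sum>k<K. p k) = 1" and x_mean: "(\<Sum>k<K. p k *\<^sub>R x k) = 0"
    and uv: "inner u v = 2 * a\<^sup>2 - 1" and EF: "inner E F = 2 * b\<^sup>2 - 1" and "0 \<le> a" "0 \<le> b"
  shows "(\<Sum>k<K. p k * ((1/2 + inner (x k) u) * (1/2 + inner (y k) E)
              + (1/2 + inner (x k) v) * (1/2 + inner (y k) F)))
     \<le> 1/2 * (1 + sqrt (b\<^sup>2 + (max (a * b) (sqrt ((1 - a\<^sup>2) * (1 - b\<^sup>2))))\<^sup>2))"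
proof -
  define m where "m = max (a * b) (sqrt ((1 - a\<^sup>2) * (1 - b\<^sup>2)))"
  define h where "h = (1/2) *\<^sub>R (E + F)"
  define l where "l = sqrt ((norm h)\<^sup>2 + m\<^sup>2)"
  define w where "w = (1/2) *\<^sub>R (u + v) + (1 / (2 * l)) *\<^sub>R (inner h E *\<^sub>R u + inner h F *\<^sub>R v)"
  have "a\<^sup>2 \<le> 1" "b\<^sup>2 \<le> 1"
    using uv EF Cauchy_Schwarz_ineq2[of u v] Cauchy_Schwarz_ineq2[of E F] units by simp_all
  then have bounds: "0 \<le> (1 - a\<^sup>2) * (1 - b\<^sup>2)"
    by simp
  have max_sq: "(max s t)\<^sup>2 = max (s\<^sup>2) (t\<^sup>2)" if "0 \<le> s" "0 \<le> t" for s t :: real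
    using that by (simp add: max_def power_mono)
  have "m\<^sup>2 = max ((a * b)\<^sup>2) ((sqrt ((1 - a\<^sup>2) * (1 - b\<^sup>2)))\<^sup>2)"
    unfolding m_def using \<open>0 \<le> a\<close> \<open>0 \<le> b\<close> bounds by (intro max_sq) simp_all
  also have "\<dots> = max ((a * b)\<^sup>2) ((1 - a\<^sup>2) * (1 - b\<^sup>2))"
    using bounds by simp
  finally have m_sq:
    "max ((1 + inner E F) * (1 + inner u v)) ((1 - inner E F) * (1 - inner u v)) \<le> (2 * m)\<^sup>2"
    unfolding uv EF by (simp add: max_def power_mult_distrib algebra_simps)
  have "(norm h)\<^sup>2 = inner h h"
    by (rule power2_norm_eq_inner)
  also have "\<dots> = b\<^sup>2"
    using units EF
    unfolding h_def inner_add_left inner_add_right inner_scaleR_left inner_scaleR_right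
    by (simp add: inner_commute[of F E] dot_square_norm field_simps)
  finally have l_eq: "l = sqrt (b\<^sup>2 + m\<^sup>2)"
    unfolding l_def by simp
  have "0 \<le> m"
    unfolding m_def using \<open>0 \<le> a\<close> \<open>0 \<le> b\<close> by (simp add: le_max_iff_disj)
  then have "(\<Sum>k<K. p k * ((1/2 + inner (x k) u) * (1/2 + inner (y k) E)
              + (1/2 + inner (x k) v) * (1/2 + inner (y k) F)))
     \<le> (\<Sum>k<K. p k * (1/2 + l/2 + inner (x k) w))"
    using terms m_sq unfolding w_def l_def h_def
    by (intro sum_mono mult_left_mono bloch_term_le[OF units]) auto
  also have "\<dots> = (\<Sum>k<K. p k) * (1/2 + l/2) + inner (\<Sum>k<K. p k *\<^sub>R x k) w"
    by (simp add: distrib_left sum.distrib sum_distrib_right sum_divide_distrib inner_sum_left)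
  also have "\<dots> = 1/2 * (1 + l)"
    using p_sum x_mean by simp
  finally show ?thesis
    unfolding l_eq m_def .
qed

lemma sum_UNIV_2x2: "sum f (UNIV :: (2 \<times> 2) set) = f (1, 1) + f (1, 2) + f (2, 1) + f (2, 2)"
proof -
  have "sum f (UNIV :: (2 \<times> 2) set) = (\<Sum>i\<in>UNIV. \<Sum>j\<in>UNIV. f (i, j))"
    unfolding UNIV_Times_UNIV[symmetric] by (rule sum.cartesian_product')
  then show ?thesis
    by (simp add: sum_2 add.assoc)
qed

lemma cinner_2: "cinner (u :: complex^2) w = cnj (u$1) * w$1 + cnj (u$2) * w$2"
  by (simp add: cinner_def sum_2)

lemma cinner_mult_vec_2:
  "cinner (x :: complex^2) ((A :: qmat) *v x)
     = cnj (x$1) * (A$1$1 * x$1 + A$1$2 * x$2) + cnj (x$2) * (A$2$1 * x$1 + A$2$2 * x$2)"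
  by (simp add: cinner_2 matrix_vector_mult_def sum_2)

lemma ctrace_2: "ctrace (A :: qmat) = A$1$1 + A$2$2"
  by (simp add: ctrace_def sum_2)

lemma power2_norm_vec_2: "(norm (x :: complex^2))\<^sup>2 = (cmod (x$1))\<^sup>2 + (cmod (x$2))\<^sup>2"
  by (simp add: norm_vec_def L2_set_def sum_2)

definition hermitian :: "complex^'n::finite^'n \<Rightarrow> bool" where
  "hermitian A \<longleftrightarrow> (\<forall>i j. A$j$i = cnj (A$i$j))"

lemma hermitian_2_iff:
  "hermitian (A :: qmat) \<longleftrightarrow> Im (A$1$1) = 0 \<and> Im (A$2$2) = 0 \<and> A$2$1 = cnj (A$1$2)"
  unfolding hermitian_def forall_2 by (auto simp: complex_eq_iff)

lemma psd_imp_hermitian: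
  fixes A :: qmat
  assumes "psd A"
  shows "hermitian A"
proof -
  have real: "Im (cinner v (A *v v)) = 0" for v
    using assms unfolding psd_def by (simp add: complex_is_Real_iff)
  have "Im (A$1$1) = 0" "Im (A$2$2) = 0"
    using real[of "vector [1, 0]"] real[of "vector [0, 1]"] by (simp_all add: cinner_mult_vec_2)
  moreover from this have "Im (A$1$2) + Im (A$2$1) = 0" "Re (A$1$2) - Re (A$2$1) = 0"
    using real[of "vector [1, 1]"] real[of "vector [1, \<i>]"] by (simp_all add: cinner_mult_vec_2)
  ultimately show ?thesis
    unfolding hermitian_2_iff by (simp add: complex_eq_iff)
qed

lemma cinner_mult_vec_hermitian:
  assumes "hermitian (A :: qmat)"
  shows "cinner x (A *v x) = complex_of_real (Re (A$1$1) * (cmod (x$1))\<^sup>2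
            + Re (A$2$2) * (cmod (x$2))\<^sup>2 + 2 * Re (cnj (x$1) * A$1$2 * x$2))"
  using assms unfolding hermitian_2_iff cinner_mult_vec_2
  by (simp add: complex_eq_iff cmod_power2) (simp add: algebra_simps power2_eq_square)

lemma psd_2_entries:
  fixes A :: qmat
  assumes "psd A"
  shows "0 \<le> Re (A$1$1)" "0 \<le> Re (A$2$2)" "(cmod (A$1$2))\<^sup>2 \<le> Re (A$1$1) * Re (A$2$2)"
proof -
  define r1 r2 q where "r1 = Re (A$1$1)" and "r2 = Re (A$2$2)" and "q = A$1$2"
  have form: "Re (cinner v (A *v v))
      = r1 * (cmod (v$1))\<^sup>2 + r2 * (cmod (v$2))\<^sup>2 + 2 * Re (cnj (v$1) * q * v$2)" for v
    unfolding cinner_mult_vec_hermitian[OF psd_imp_hermitian[OF assms]] r1_def r2_def q_def by simp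
  have nonneg: "0 \<le> Re (cinner v (A *v v))" for v
    using assms unfolding psd_def by simp
  show r1: "0 \<le> Re (A$1$1)" and r2: "0 \<le> Re (A$2$2)"
    using nonneg[of "vector [1, 0]"] nonneg[of "vector [0, 1]"] unfolding form
    by (simp_all add: r1_def r2_def)
  have q_sq: "cnj q * q = complex_of_real ((cmod q)\<^sup>2)" "q * cnj q = complex_of_real ((cmod q)\<^sup>2)"
    using complex_norm_square[of q] by (simp_all add: mult.commute)
  have cmod_q: "cmod q * cmod q = Re q * Re q + Im q * Im q"
    using cmod_power2[of q] by (simp add: power2_eq_square)
  \<comment> \<open>(r2, -cnj q) and (-q, r1) are annihilated by the second resp. first row of A;
    the third test vector handles r1 = r2 = 0\<close>
  have "0 \<le> r1 * r2\<^sup>2 - r2 * (cmod q)\<^sup>2"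
    using nonneg[of "vector [complex_of_real r2, - cnj q]"] unfolding form
    by (simp add: algebra_simps q_sq power2_eq_square cmod_q)
  moreover have "0 \<le> r2 * r1\<^sup>2 - r1 * (cmod q)\<^sup>2"
    using nonneg[of "vector [- q, complex_of_real r1]"] unfolding form
    by (simp add: algebra_simps q_sq power2_eq_square cmod_q)
  moreover have "0 \<le> r1 + r2 * (cmod q)\<^sup>2 - 2 * (cmod q)\<^sup>2"
    using nonneg[of "vector [1, - cnj q]"] unfolding form
    by (simp add: algebra_simps q_sq power2_eq_square cmod_q)
  ultimately show "(cmod (A$1$2))\<^sup>2 \<le> Re (A$1$1) * Re (A$2$2)"
    using r1 r2 unfolding r1_def[symmetric] r2_def[symmetric] q_def[symmetric]
    by (cases "r2 > 0"; cases "r1 > 0")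
       (auto simp: power2_eq_square algebra_simps mult_le_cancel_left_pos)
qed

(* Bloch vectors with the second coordinate negated; bloch_op carries an extra factor 1/2. *)
definition bloch_vec :: "complex^2 \<Rightarrow> real \<times> real \<times> real" where
  "bloch_vec x =
     (2 * Re (cnj (x$1) * x$2), - 2 * Im (cnj (x$1) * x$2), (cmod (x$1))\<^sup>2 - (cmod (x$2))\<^sup>2)"

definition bloch_op :: "qmat \<Rightarrow> real \<times> real \<times> real" where
  "bloch_op A = (Re (A$1$2), Im (A$1$2), (Re (A$1$1) - Re (A$2$2)) / 2)"

lemma cinner_mult_vec_bloch:
  assumes "hermitian A"
  shows "cinner x (A *v x) = complex_of_real ((Re (A$1$1) + Re (A$2$2)) / 2 * (norm x)\<^sup>2
           + inner (bloch_op A) (bloch_vec x))"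
  unfolding cinner_mult_vec_hermitian[OF assms] bloch_vec_def bloch_op_def power2_norm_vec_2
  by (simp add: algebra_simps) (simp add: field_simps)

lemma inner_bloch_vec:
  "inner (bloch_vec x) (bloch_vec y) = 2 * (cmod (cinner x y))\<^sup>2 - (norm x)\<^sup>2 * (norm y)\<^sup>2"
  unfolding bloch_vec_def cinner_2 power2_norm_vec_2
  by (simp add: cmod_power2) (simp add: power2_eq_square algebra_simps)

lemma norm_bloch_vec: "norm (bloch_vec x) = (norm x)\<^sup>2"
proof -
  have "cinner x x = complex_of_real ((norm x)\<^sup>2)"
    unfolding cinner_2 power2_norm_vec_2
    using complex_norm_square[of "x$1"] complex_norm_square[of "x$2"] by (simp add: mult.commute)
  then have "cmod (cinner x x) = (norm x)\<^sup>2"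
    by (simp add: norm_power)
  then have "(norm (bloch_vec x))\<^sup>2 = ((norm x)\<^sup>2)\<^sup>2"
    unfolding power2_norm_eq_inner[of "bloch_vec x"] inner_bloch_vec by algebra
  then show ?thesis
    by (rule power2_eq_imp_eq) simp_all
qed

lemma psd_norm_bloch_op_le:
  assumes "psd A"
  shows "norm (bloch_op A) \<le> (Re (A$1$1) + Re (A$2$2)) / 2"
proof (rule power2_le_imp_le)
  have "(norm (bloch_op A))\<^sup>2 = (cmod (A$1$2))\<^sup>2 + ((Re (A$1$1) - Re (A$2$2)) / 2)\<^sup>2"
    unfolding bloch_op_def by (simp add: norm_Pair cmod_power2 power_divide)
  also have "\<dots> \<le> ((Re (A$1$1) - Re (A$2$2)) / 2)\<^sup>2 + Re (A$1$1) * Re (A$2$2)"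
    using psd_2_entries(3)[OF assms] by simp
  also have "\<dots> = ((Re (A$1$1) + Re (A$2$2)) / 2)\<^sup>2"
    by (simp add: power2_eq_square field_simps)
  finally show "(norm (bloch_op A))\<^sup>2 \<le> ((Re (A$1$1) + Re (A$2$2)) / 2)\<^sup>2" .
  show "0 \<le> (Re (A$1$1) + Re (A$2$2)) / 2"
    using psd_2_entries(1,2)[OF assms] by simp
qed

lemma density_2D:
  assumes "density (A :: qmat)"
  shows "hermitian A" "Re (A$1$1) + Re (A$2$2) = 1" "norm (bloch_op A) \<le> 1/2"
proof -
  show "hermitian A"
    using assms psd_imp_hermitian unfolding density_def by blast
  show trace: "Re (A$1$1) + Re (A$2$2) = 1"
    using arg_cong[of _ _ Re, OF conjunct2[OF assms[unfolded density_def]]] by (simp add: ctrace_2)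
  show "norm (bloch_op A) \<le> 1/2"
    using psd_norm_bloch_op_le[of A] assms trace unfolding density_def by simp
qed

lemma cinner_density_bloch:
  assumes "density A" "norm x = 1"
  shows "cinner x (A *v x) = complex_of_real (1/2 + inner (bloch_op A) (bloch_vec x))"
  using cinner_mult_vec_bloch[OF density_2D(1)[OF assms(1)], of x] density_2D(2)[OF assms(1)]
    assms(2)
  by simp

definition vconj :: "complex^'n::finite \<Rightarrow> complex^'n" where
  "vconj x = (\<chi> i. cnj (x$i))"

lemma norm_vconj: "norm (vconj x) = norm x"
  by (simp add: vconj_def norm_vec_def)

lemma cinner_vconj: "cinner (vconj x) (vconj y) = cnj (cinner x y)"
  by (simp add: vconj_def cinner_def)

(* The projection onto (|00> + |11>) / sqrt 2. *)
definition bell_state :: "complex^(2 \<times> 2)^(2 \<times> 2)" where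
  "bell_state = (\<chi> r c. if fst r = snd r \<and> fst c = snd c then 1/2 else 0)"

definition bell_block :: "2 \<Rightarrow> 2 \<Rightarrow> qmat" where
  "bell_block i i' = (\<chi> j l. bell_state $ (i, j) $ (i', l))"

lemma bell_block_nth: "bell_block i i' $ j $ l = (if i = j \<and> i' = l then 1/2 else 0)"
  by (simp add: bell_block_def bell_state_def)

lemma density_bell_state: "density bell_state"
proof -
  have form: "cinner v (bell_state *v v) = complex_of_real ((cmod (v$(1,1) + v$(2,2)))\<^sup>2 / 2)" for v
  proof -
    have "cinner v (bell_state *v v) = cnj (v$(1,1) + v$(2,2)) * (v$(1,1) + v$(2,2)) / 2"
      by (simp add: cinner_def matrix_vector_mult_def sum_UNIV_2x2 bell_state_def algebra_simps
          add_divide_distrib)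
    also have "\<dots> = complex_of_real ((cmod (v$(1,1) + v$(2,2)))\<^sup>2 / 2)"
      using complex_norm_square[of "v$(1,1) + v$(2,2)"] by (simp add: mult.commute)
    finally show ?thesis .
  qed
  have "psd bell_state"
    unfolding psd_def form by simp
  moreover have "ctrace bell_state = 1"
    by (simp add: ctrace_def sum_UNIV_2x2 bell_state_def)
  ultimately show ?thesis
    unfolding density_def by simp
qed

lemma matrix_eq_sum_bell_blocks:
  "X = cscale (2 * X$1$1) (bell_block 1 1) + cscale (2 * X$1$2) (bell_block 1 2)
     + cscale (2 * X$2$1) (bell_block 2 1) + cscale (2 * X$2$2) (bell_block 2 2)"
  by (simp add: vec_eq_iff forall_2 cscale_def bell_block_nth)

lemma cinner_sum_cscale:
  fixes x :: "complex^2" and B :: "'k \<Rightarrow> qmat"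
  shows "cinner x ((\<Sum>k\<in>S. cscale (c k) (B k)) *v x) = (\<Sum>k\<in>S. c k * cinner x (B k *v x))"
  unfolding cinner_mult_vec_2
  by (simp add: cscale_def sum_distrib_left sum_distrib_right sum.distrib algebra_simps)

lemma choi_block_nth:
  assumes "id_tensor \<Psi> bell_state = (\<Sum>k<K. cscale (complex_of_real (p k)) (kron (a k) (b k)))"
  shows "\<Psi> (bell_block i i') $ j $ l = (\<Sum>k<K. complex_of_real (p k) * (a k $ i $ i' * b k $ j $ l))"
proof -
  have "\<Psi> (bell_block i i') $ j $ l = id_tensor \<Psi> bell_state $ (i, j) $ (i', l)"
    by (simp add: id_tensor_def bell_block_def)
  then show ?thesis
    unfolding assms by (simp add: cscale_def kron_def)
qed

lemma measure_prepare_of_choi: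
  assumes "complex_linear \<Psi>"
    and choi: "id_tensor \<Psi> bell_state = (\<Sum>k<K. cscale (complex_of_real (p k)) (kron (a k) (b k)))"
  shows "\<Psi> X = (\<Sum>k<K. cscale (2 * complex_of_real (p k) * ctrace (transpose X ** a k)) (b k))"
proof -
  have add: "\<Psi> (A + B) = \<Psi> A + \<Psi> B" and scale: "\<Psi> (cscale c A) = cscale c (\<Psi> A)" for A B c
    using assms(1) unfolding complex_linear_def by auto
  have "\<Psi> X = cscale (2 * X$1$1) (\<Psi> (bell_block 1 1)) + cscale (2 * X$1$2) (\<Psi> (bell_block 1 2))
      + cscale (2 * X$2$1) (\<Psi> (bell_block 2 1)) + cscale (2 * X$2$2) (\<Psi> (bell_block 2 2))"
    by (subst matrix_eq_sum_bell_blocks[of X]) (simp only: add scale)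
  then show ?thesis
    by (simp add: vec_eq_iff cscale_def choi_block_nth[OF choi] ctrace_2 transpose_def
        matrix_matrix_mult_def sum_2 sum_distrib_left sum.distrib algebra_simps)
qed

lemma partial_trace_of_choi:
  assumes "trace_preserving \<Psi>" and "\<forall>k<K. ctrace (b k) = 1"
    and choi: "id_tensor \<Psi> bell_state = (\<Sum>k<K. cscale (complex_of_real (p k)) (kron (a k) (b k)))"
  shows "(\<Sum>k<K. cscale (complex_of_real (p k)) (a k)) = cscale (1/2) (mat 1)"
proof -
  have "(\<Sum>k<K. complex_of_real (p k) * a k $ i $ i') = ctrace (\<Psi> (bell_block i i'))" for i i'
  proof -
    have "ctrace (\<Psi> (bell_block i i'))
        = (\<Sum>k<K. complex_of_real (p k) * a k $ i $ i' * ctrace (b k))"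
      unfolding ctrace_2 choi_block_nth[OF choi]
      by (simp add: ctrace_2 sum.distrib[symmetric] algebra_simps)
    also have "\<dots> = (\<Sum>k<K. complex_of_real (p k) * a k $ i $ i')"
      using assms(2) by (intro sum.cong) auto
    finally show ?thesis ..
  qed
  also have "ctrace (\<Psi> (bell_block i i')) = ctrace (bell_block i i')" for i i'
    using assms(1) unfolding trace_preserving_def by blast
  finally show ?thesis
    by (simp add: vec_eq_iff forall_2 cscale_def mat_def ctrace_2 bell_block_nth)
qed

lemma sum_bloch_op_eq_0:
  assumes "(\<Sum>k\<in>S. cscale (complex_of_real (p k)) (A k)) = cscale c (mat 1)"
  shows "(\<Sum>k\<in>S. p k *\<^sub>R bloch_op (A k)) = 0"
proof -
  have entry: "(\<Sum>k\<in>S. complex_of_real (p k) * A k $ i $ j) = (if i = j then c else 0)" for i j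
    using arg_cong[OF assms, of "\<lambda>M. M $ i $ j"] by (simp add: cscale_def mat_def)
  have "(\<Sum>k\<in>S. p k * Re (A k $ 1 $ 2)) = 0" "(\<Sum>k\<in>S. p k * Im (A k $ 1 $ 2)) = 0"
    "(\<Sum>k\<in>S. p k * Re (A k $ 1 $ 1)) = (\<Sum>k\<in>S. p k * Re (A k $ 2 $ 2))"
    using arg_cong[OF entry[of 1 2], of Re] arg_cong[OF entry[of 1 2], of Im]
      arg_cong[OF entry[of 1 1], of Re] arg_cong[OF entry[of 2 2], of Re]
    by (simp_all add: Re_sum Im_sum)
  then show ?thesis
    by (simp add: bloch_op_def prod_eq_iff fst_sum snd_sum o_def right_diff_distrib sum_subtractf
        flip: sum_divide_distrib)
qed

lemma cinner_measure_prepare: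
  assumes "\<forall>k\<in>S. density (a k) \<and> density (b k)" "norm x = 1" "norm g = 1"
    and "\<Psi> (proj x)
      = (\<Sum>k\<in>S. cscale (2 * complex_of_real (p k) * ctrace (transpose (proj x) ** a k)) (b k))"
  shows "Re (cinner g (\<Psi> (proj x) *v g))
    = (\<Sum>k\<in>S. 2 * p k * ((1/2 + inner (bloch_op (a k)) (bloch_vec (vconj x)))
                         * (1/2 + inner (bloch_op (b k)) (bloch_vec g))))"
proof -
  have "ctrace (transpose (proj x) ** A) = cinner (vconj x) (A *v vconj x)" for A :: qmat
    by (simp add: ctrace_2 transpose_def matrix_matrix_mult_def proj_def vconj_def cinner_mult_vec_2
        sum_2 algebra_simps)
  then have "cinner g (\<Psi> (proj x) *v g)
      = (\<Sum>k\<in>S. complex_of_real (2 * p k * ((1/2 + inner (bloch_op (a k)) (bloch_vec (vconj x)))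
                                         * (1/2 + inner (bloch_op (b k)) (bloch_vec g)))))"
    using assms unfolding assms(4) cinner_sum_cscale
    by (intro sum.cong) (auto simp: cinner_density_bloch norm_vconj)
  then show ?thesis
    by (simp add: Re_sum)
qed

lemma entanglement_breaking_bloch_form:
  assumes "entanglement_breaking \<Psi>"
  obtains K :: nat and p :: "nat \<Rightarrow> real" and x y :: "nat \<Rightarrow> real \<times> real \<times> real"
  where "\<forall>k<K. 0 \<le> p k \<and> norm (x k) \<le> 1/2 \<and> norm (y k) \<le> 1/2"
    and "(\<Sum>k<K. p k) = 1" and "(\<Sum>k<K. p k *\<^sub>R x k) = 0"
    and "\<And>s g. norm s = 1 \<Longrightarrow> norm g = 1 \<Longrightarrow> Re (cinner g (\<Psi> (proj s) *v g))
           = (\<Sum>k<K. 2 * p k * ((1/2 + inner (x k) (bloch_vec (vconj s)))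
                              * (1/2 + inner (y k) (bloch_vec g))))"
proof -
  have channel: "complex_linear \<Psi>" "trace_preserving \<Psi>"
    using assms unfolding entanglement_breaking_def quantum_channel_def by simp_all
  have "separable (id_tensor \<Psi> bell_state)"
    using assms density_bell_state unfolding entanglement_breaking_def by blast
  then obtain K :: nat and p :: "nat \<Rightarrow> real" and a b :: "nat \<Rightarrow> qmat"
    where props: "\<forall>k<K. 0 \<le> p k \<and> density (a k) \<and> density (b k)" "(\<Sum>k<K. p k) = 1"
    and choi: "id_tensor \<Psi> bell_state = (\<Sum>k<K. cscale (complex_of_real (p k)) (kron (a k) (b k)))"
    unfolding separable_def by blast
  have "(\<Sum>k<K. cscale (complex_of_real (p k)) (a k)) = cscale (1/2) (mat 1)"
    using props(1) by (intro partial_trace_of_choi[OF channel(2) _ choi]) (auto simp: density_def)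
  then have "(\<Sum>k<K. p k *\<^sub>R bloch_op (a k)) = 0"
    by (rule sum_bloch_op_eq_0)
  moreover have "\<forall>k<K. 0 \<le> p k \<and> norm (bloch_op (a k)) \<le> 1/2 \<and> norm (bloch_op (b k)) \<le> 1/2"
    using props(1) density_2D(3) by blast
  moreover have "Re (cinner g (\<Psi> (proj s) *v g))
    = (\<Sum>k<K. 2 * p k * ((1/2 + inner (bloch_op (a k)) (bloch_vec (vconj s)))
                       * (1/2 + inner (bloch_op (b k)) (bloch_vec g))))"
    if "norm s = 1" "norm g = 1" for s g
    using props(1) that
    by (intro cinner_measure_prepare measure_prepare_of_choi[OF channel(1) choi]) auto
  ultimately show thesis
    using that[of K p "bloch_op \<circ> a" "bloch_op \<circ> b"] props(2) by simp
qed

theorem corollary4: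
  fixes \<psi> \<phi> e f :: "complex^2"
  assumes "norm \<psi> = 1" "norm \<phi> = 1" "norm e = 1" "norm f = 1"
  shows "\<forall>\<Psi>. entanglement_breaking \<Psi> \<longrightarrow>
    Re (1/2 * cinner e (\<Psi> (proj \<psi>) *v e) + 1/2 * cinner f (\<Psi> (proj \<phi>) *v f))
    \<le> 1/2 * (1 + sqrt ((cmod (cinner e f))\<^sup>2 +
          (max (cmod (cinner \<psi> \<phi>) * cmod (cinner e f))
               (sqrt ((1 - (cmod (cinner \<psi> \<phi>))\<^sup>2) * (1 - (cmod (cinner e f))\<^sup>2))))\<^sup>2))"
proof (intro allI impI)
  fix \<Psi> assume "entanglement_breaking \<Psi>"
  then obtain K :: nat and p :: "nat \<Rightarrow> real" and x y :: "nat \<Rightarrow> real \<times> real \<times> real"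
    where bounded: "\<forall>k<K. 0 \<le> p k \<and> norm (x k) \<le> 1/2 \<and> norm (y k) \<le> 1/2"
    and p_sum: "(\<Sum>k<K. p k) = 1" and mean: "(\<Sum>k<K. p k *\<^sub>R x k) = 0"
    and objective: "\<And>s g. norm s = 1 \<Longrightarrow> norm g = 1 \<Longrightarrow> Re (cinner g (\<Psi> (proj s) *v g))
           = (\<Sum>k<K. 2 * p k * ((1/2 + inner (x k) (bloch_vec (vconj s)))
                              * (1/2 + inner (y k) (bloch_vec g))))"
    using entanglement_breaking_bloch_form by blast
  have overlaps:
    "inner (bloch_vec (vconj \<psi>)) (bloch_vec (vconj \<phi>)) = 2 * (cmod (cinner \<psi> \<phi>))\<^sup>2 - 1"
    "inner (bloch_vec e) (bloch_vec f) = 2 * (cmod (cinner e f))\<^sup>2 - 1"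
    using assms by (simp_all add: inner_bloch_vec norm_vconj cinner_vconj)
  have units: "norm (bloch_vec (vconj \<psi>)) = 1" "norm (bloch_vec (vconj \<phi>)) = 1"
    "norm (bloch_vec e) = 1" "norm (bloch_vec f) = 1"
    using assms by (simp_all add: norm_bloch_vec norm_vconj)
  have "Re (1/2 * cinner e (\<Psi> (proj \<psi>) *v e) + 1/2 * cinner f (\<Psi> (proj \<phi>) *v f))
    = 1/2 * Re (cinner e (\<Psi> (proj \<psi>) *v e)) + 1/2 * Re (cinner f (\<Psi> (proj \<phi>) *v f))"
    by simp
  also have "\<dots> = (\<Sum>k<K. p k *
      ((1/2 + inner (x k) (bloch_vec (vconj \<psi>))) * (1/2 + inner (y k) (bloch_vec e))
       + (1/2 + inner (x k) (bloch_vec (vconj \<phi>))) * (1/2 + inner (y k) (bloch_vec f))))"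
    unfolding objective[OF assms(1,3)] objective[OF assms(2,4)]
    by (simp add: sum_distrib_left sum.distrib[symmetric] algebra_simps)
  finally show "Re (1/2 * cinner e (\<Psi> (proj \<psi>) *v e) + 1/2 * cinner f (\<Psi> (proj \<phi>) *v f))
    \<le> 1/2 * (1 + sqrt ((cmod (cinner e f))\<^sup>2 +
          (max (cmod (cinner \<psi> \<phi>) * cmod (cinner e f))
               (sqrt ((1 - (cmod (cinner \<psi> \<phi>))\<^sup>2) * (1 - (cmod (cinner e f))\<^sup>2))))\<^sup>2))"
    using bloch_average_le[OF units bounded p_sum mean overlaps] by simp
qed

end
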